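(* (a) The cell $S_{z_1,z_1}$ is the disjoint union of exactly three $G$-orbits of points $(P,Pz_1,Pz_1n)$: $n=n(1,0,0)$, dimension $7$, stabilizer $\{d(a,a,1/a^2):a\in\mathbb{R}^\times\}$; $n=n(0,1,0)$, dimension $6$, stabilizer $\left\{\begin{pmatrix}a&0&0\\0&1/a^2&x\\0&0&a\end{pmatrix}:a\in\mathbb{R}^\times,x\in\mathbb{R}\right\}$; $n=n(0,0,0)$, dimension $5$, stabilizer $D\cdot\{n(0,0,x):x\in\mathbb{R}\}$. (b) The cell $S_{z_1,z_2}$ is the disjoint union of exactly two $G$-orbits of points $(P,Pz_1,Pz_2n)$: $n=n(0,1,0)$, dimension $7$, stabilizer $\{d(a,1/a^2,a):a\in\mathbb{R}^\times\}$; $n=n(0,0,0)$, dimension $6$, stabilizer $D$. (c) The cell $S_{z_1,s_1}$ is the disjoint union of exactly two $G$-orbits of points $(P,Pz_1,Ps_1n)$: $n=n(1,0,0)$, dimension $6$, stabilizer $\left\{\begin{pmatrix}a&0&0\\0&a&x\\0&0&1/a^2\end{pmatrix}:a\in\mathbb{R}^\times,x\in\mathbb{R}\right\}$; $n=n(0,0,0)$, dimension $5$, stabilizer $D\cdot\{n(0,0,x):x\in\mathbb{R}\}$. (d) The cell $S_{z_1,s_2}$ is a single $G$-orbit, that of $(P,Pz_1,Ps_2)$, of dimension $6$ with stabilizer $D$. (e) The cell $S_{z_1,1}$ is a single $G$-orbit, that of $(P,Pz_1,P)$, of dimension $5$ with stabilizer $D\cdot\{n(0,0,x):x\in\mathb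b{R}\}$.
   Context: $G=\mathrm{SL}_3(\mathbb{R})$, $P$ the upper triangular matrices in $G$, $D$ the diagonal matrices in $G$; $G$ acts on $X=(P\backslash G)^3$ by right multiplication in each coordinate. $n(x,y,z)=\begin{pmatrix}1&x&y\\0&1&z\\0&0&1\end{pmatrix}$, $d(a,b,c)=\operatorname{diag}(a,b,c)$. $1$ is the identity matrix, $s_1=\begin{pmatrix}0&1&0\\1&0&0\\0&0&-1\end{pmatrix}$, $s_2=\begin{pmatrix}-1&0&0\\0&0&1\\0&1&0\end{pmatrix}$, $z_1=\begin{pmatrix}0&-1&0\\0&0&-1\\1&0&0\end{pmatrix}$, $z_2=\begin{pmatrix}0&0&1\\-1&0&0\\0&-1&0\end{pmatrix}$. $S_{v,w}=\big(\{P\}\times P\backslash PvP\times P\backslash PwP\big)\cdot G$. The stabilizer of $(P,Pv,Pwn)$ is $P\cap v^{-1}Pv\cap (wn)^{-1}P(wn)$. *)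

theory Defs
  imports "HOL-Analysis.Analysis"
begin

type_synonym m3 = "real^3^3"

definition mat3 :: "real \<Rightarrow> real \<Rightarrow> real \<Rightarrow> real \<Rightarrow> real \<Rightarrow> real \<Rightarrow> real \<Rightarrow> real \<Rightarrow> real \<Rightarrow> m3" where
  "mat3 a11 a12 a13 a21 a22 a23 a31 a32 a33 =
     vector [vector [a11, a12, a13], vector [a21, a22, a23], vector [a31, a32, a33]]"

definition SL3 :: "m3 set" where
  "SL3 = {A. det A = 1}"

definition Pgrp :: "m3 set" where
  "Pgrp = {mat3 a x y 0 b z 0 0 c | a b c x y z. a * b * c = 1}"

definition dmat :: "real \<Rightarrow> real \<Rightarrow> real \<Rightarrow> m3" where
  "dmat a b c = mat3 a 0 0 0 b 0 0 0 c"

definition nmat :: "real \<Rightarrow> real \<Rightarrow> real \<Rightarrow> m3" where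
  "nmat x y z = mat3 1 x y 0 1 z 0 0 1"

definition Dgrp :: "m3 set" where
  "Dgrp = {dmat a b c | a b c. a * b * c = 1}"

definition s1 :: m3 where "s1 = mat3 0 1 0 1 0 0 0 0 (-1)"
definition s2 :: m3 where "s2 = mat3 (-1) 0 0 0 0 1 0 1 0"
definition z1 :: m3 where "z1 = mat3 0 (-1) 0 0 0 (-1) 1 0 0"
definition z2 :: m3 where "z2 = mat3 0 0 1 (-1) 0 0 0 (-1) 0"

definition setmul :: "m3 set \<Rightarrow> m3 set \<Rightarrow> m3 set" where
  "setmul A B = {a ** b | a b. a \<in> A \<and> b \<in> B}"

text \<open>The right coset P g, i.e. a point of P\textbackslash G.\<close>
definition Pcoset :: "m3 \<Rightarrow> m3 set" where
  "Pcoset g = {p ** g | p. p \<in> Pgrp}"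

type_synonym pt = "m3 set \<times> m3 set \<times> m3 set"

definition ract :: "m3 set \<Rightarrow> m3 \<Rightarrow> m3 set" where
  "ract S g = (\<lambda>h. h ** g) ` S"

definition act :: "pt \<Rightarrow> m3 \<Rightarrow> pt" where
  "act x g = (case x of (u, v, w) \<Rightarrow> (ract u g, ract v g, ract w g))"

definition orbit :: "pt \<Rightarrow> pt set" where
  "orbit x = {act x g | g. g \<in> SL3}"

definition stab :: "pt \<Rightarrow> m3 set" where
  "stab x = {g \<in> SL3. act x g = x}"

text \<open>P\textbackslash PvP, as a set of points of P\textbackslash G.\<close>
definition PvP_cosets :: "m3 \<Rightarrow> m3 set set" where
  "PvP_cosets v = {Pcoset q | q. q \<in> setmul (setmul Pgrp {v}) Pgrp}"

text \<open>The cell S_{v,w} = ({P} x P\textbackslash PvP x P\textbackslash PwP) . G.\<close>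
definition cell :: "m3 \<Rightarrow> m3 \<Rightarrow> pt set" where
  "cell v w = {act (Pcoset (mat 1), a, b) g | a b g.
                 a \<in> PvP_cosets v \<and> b \<in> PvP_cosets w \<and> g \<in> SL3}"

definition lie_alg :: "m3 set \<Rightarrow> m3 set" where
  "lie_alg H = {X. \<exists>\<gamma>::real \<Rightarrow> m3. \<gamma> 0 = mat 1 \<and> (\<forall>t. \<gamma> t \<in> H)
                      \<and> (\<gamma> has_vector_derivative X) (at 0)}"

definition lie_dim :: "m3 set \<Rightarrow> nat" where
  "lie_dim H = dim (lie_alg H)"

text \<open>Dimension of the orbit G.x, the homogeneous space G / Stab(x):
  dim G - dim Stab(x).\<close>
definition orbit_dim :: "pt \<Rightarrow> nat" where
  "orbit_dim x = lie_dim SL3 - lie_dim (stab x)"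

definition base :: "m3 \<Rightarrow> m3 \<Rightarrow> m3 \<Rightarrow> pt" where
  "base v w n = (Pcoset (mat 1), Pcoset v, Pcoset (w ** n))"

end

theory Submission
  imports Defs
begin

(* Every point of S_{v,w} is G-equivalent to some (P, Pv, Pwu) with u in P, and
   (P, Pv, Pwn') lies in the orbit of (P, Pv, Pwn) iff Pwn' = Pwnr for some r in
   P_v = P \<inter> v^-1 P v; the stabiliser of (P, Pv, Pwn) is P_v \<inter> (wn)^-1 P (wn).
   For v = z1 the group P_v is D.{n(0,0,x)}, and explicit elements of it bring every
   coset Pwu to one of the listed normal forms; the normal forms are pairwise
   inequivalent by comparing matrix entries. Orbit dimensions are 8 - dim Stab, where
   the Lie algebra of each stabiliser is bounded above by the linear conditions its
   elements satisfy (together with trace 0, coming from det = 1) and bounded below by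
   one-parameter subgroups t \<mapsto> exp(tH) and t \<mapsto> 1 + tE. *)

lemma mat3_nth [simp]:
  "mat3 a11 a12 a13 a21 a22 a23 a31 a32 a33 $ 1 $ 1 = a11"
  "mat3 a11 a12 a13 a21 a22 a23 a31 a32 a33 $ 1 $ 2 = a12"
  "mat3 a11 a12 a13 a21 a22 a23 a31 a32 a33 $ 1 $ 3 = a13"
  "mat3 a11 a12 a13 a21 a22 a23 a31 a32 a33 $ 2 $ 1 = a21"
  "mat3 a11 a12 a13 a21 a22 a23 a31 a32 a33 $ 2 $ 2 = a22"
  "mat3 a11 a12 a13 a21 a22 a23 a31 a32 a33 $ 2 $ 3 = a23"
  "mat3 a11 a12 a13 a21 a22 a23 a31 a32 a33 $ 3 $ 1 = a31"
  "mat3 a11 a12 a13 a21 a22 a23 a31 a32 a33 $ 3 $ 2 = a32"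
  "mat3 a11 a12 a13 a21 a22 a23 a31 a32 a33 $ 3 $ 3 = a33"
  by (simp_all add: mat3_def)

lemma mat3_eta: "(A::m3) = mat3 (A$1$1) (A$1$2) (A$1$3) (A$2$1) (A$2$2) (A$2$3) (A$3$1) (A$3$2) (A$3$3)"
  by (simp add: vec_eq_iff forall_3)

lemma mat3_eq_iff [simp]:
  "mat3 a11 a12 a13 a21 a22 a23 a31 a32 a33 = mat3 b11 b12 b13 b21 b22 b23 b31 b32 b33 \<longleftrightarrow>
   a11 = b11 \<and> a12 = b12 \<and> a13 = b13 \<and> a21 = b21 \<and> a22 = b22 \<and> a23 = b23 \<and>
   a31 = b31 \<and> a32 = b32 \<and> a33 = b33"
  by (simp add: vec_eq_iff forall_3)

lemma mat3_mult:
  "mat3 a11 a12 a13 a21 a22 a23 a31 a32 a33 ** mat3 b11 b12 b13 b21 b22 b23 b31 b32 b33 =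
   mat3 (a11*b11+a12*b21+a13*b31) (a11*b12+a12*b22+a13*b32) (a11*b13+a12*b23+a13*b33)
        (a21*b11+a22*b21+a23*b31) (a21*b12+a22*b22+a23*b32) (a21*b13+a22*b23+a23*b33)
        (a31*b11+a32*b21+a33*b31) (a31*b12+a32*b22+a33*b32) (a31*b13+a32*b23+a33*b33)"
  by (simp add: vec_eq_iff forall_3 matrix_matrix_mult_def sum_3)

lemma mat3_add:
  "mat3 a11 a12 a13 a21 a22 a23 a31 a32 a33 + mat3 b11 b12 b13 b21 b22 b23 b31 b32 b33 =
   mat3 (a11+b11) (a12+b12) (a13+b13) (a21+b21) (a22+b22) (a23+b23) (a31+b31) (a32+b32) (a33+b33)"
  by (simp add: vec_eq_iff forall_3)

lemma mat3_scaleR: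
  "c *\<^sub>R mat3 a11 a12 a13 a21 a22 a23 a31 a32 a33 =
   mat3 (c*a11) (c*a12) (c*a13) (c*a21) (c*a22) (c*a23) (c*a31) (c*a32) (c*a33)"
  by (simp add: vec_eq_iff forall_3)

lemma mat1_eq_mat3: "(mat 1 :: m3) = mat3 1 0 0 0 1 0 0 0 1"
  by (simp add: vec_eq_iff forall_3 mat_def)

lemma det_mat3:
  "det (mat3 a11 a12 a13 a21 a22 a23 a31 a32 a33) =
   a11*a22*a33 + a12*a23*a31 + a13*a21*a32 - a11*a23*a32 - a12*a21*a33 - a13*a22*a31"
  by (simp add: det_3)

lemma Pgrp_mat3_iff: "mat3 a x y d b z e f c \<in> Pgrp \<longleftrightarrow> d = 0 \<and> e = 0 \<and> f = 0 \<and> a*b*c = 1"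
  unfolding Pgrp_def by auto

lemma PgrpE:
  assumes "p \<in> Pgrp"
  obtains a x y b z c where "p = mat3 a x y 0 b z 0 0 c" "a*b*c = 1"
  using assms unfolding Pgrp_def by auto

lemma PgrpE_nonzero:
  assumes "p \<in> Pgrp"
  obtains a x y b z where "a \<noteq> 0" "b \<noteq> 0" "p = mat3 a x y 0 b z 0 0 (1/(a*b))"
proof -
  obtain a x y b z c where p: "p = mat3 a x y 0 b z 0 0 c" "a*b*c = 1"
    using assms by (rule PgrpE)
  then have "a \<noteq> 0" "b \<noteq> 0" by auto
  moreover from this have "c = 1/(a*b)" using p(2) by (simp add: field_simps mult_ac)
  ultimately show thesis using p(1) that by blast
qed

lemma Pgrp_one: "mat 1 \<in> Pgrp"
  by (simp add: mat1_eq_mat3 Pgrp_mat3_iff)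

lemma Pgrp_mult: "p \<in> Pgrp \<Longrightarrow> q \<in> Pgrp \<Longrightarrow> p ** q \<in> Pgrp"
  by (elim PgrpE) (simp add: mat3_mult Pgrp_mat3_iff algebra_simps)

lemma Pgrp_inverse:
  assumes "p \<in> Pgrp"
  obtains q where "q \<in> Pgrp" "q ** p = mat 1"
proof -
  obtain a x y b z c where p: "p = mat3 a x y 0 b z 0 0 c" "a*b*c = 1"
    using assms by (rule PgrpE)
  let ?q = "mat3 (b*c) (-x*c) (x*z - b*y) 0 (a*c) (-z*a) 0 0 (a*b)"
  have "?q \<in> Pgrp"
    using p(2) by (simp add: Pgrp_mat3_iff) algebra
  moreover have "?q ** p = mat 1"
    using p(2) unfolding p(1) by (simp add: mat3_mult mat1_eq_mat3 algebra_simps)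
  ultimately show thesis by (rule that)
qed

lemma Pgrp_subset_SL3: "Pgrp \<subseteq> SL3"
  by (auto elim!: PgrpE simp: SL3_def det_mat3)

lemma SL3_mult: "g \<in> SL3 \<Longrightarrow> h \<in> SL3 \<Longrightarrow> g ** h \<in> SL3"
  by (simp add: SL3_def det_mul)

lemma SL3_inverse:
  assumes "g \<in> SL3"
  obtains h where "h \<in> SL3" "g ** h = mat 1"
proof -
  have "invertible g" using assms by (simp add: SL3_def invertible_det_nz)
  then obtain h where h: "g ** h = mat 1" unfolding invertible_def by blast
  then have "det g * det h = 1" by (metis det_I det_mul)
  with assms h that show thesis by (simp add: SL3_def)
qed

lemma Pcoset_eq_iff: "Pcoset A = Pcoset B \<longleftrightarrow> (\<exists>p\<in>Pgrp. A = p ** B)"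
proof
  assume "Pcoset A = Pcoset B"
  moreover have "A \<in> Pcoset A"
    unfolding Pcoset_def using Pgrp_one by force
  ultimately show "\<exists>p\<in>Pgrp. A = p ** B" unfolding Pcoset_def by blast
next
  assume "\<exists>p\<in>Pgrp. A = p ** B"
  then obtain p where p: "p \<in> Pgrp" "A = p ** B" by blast
  obtain q where q: "q \<in> Pgrp" "q ** p = mat 1" using Pgrp_inverse[OF p(1)] .
  have "Pcoset A \<subseteq> Pcoset B"
    unfolding Pcoset_def p(2) using p(1) by (auto simp: matrix_mul_assoc intro: Pgrp_mult)
  moreover have "Pcoset B \<subseteq> Pcoset A"
  proof
    fix M assume "M \<in> Pcoset B"
    then obtain r where r: "r \<in> Pgrp" "M = r ** B" unfolding Pcoset_def by blast
    have "(r ** q) ** A = r ** (q ** p) ** B"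
      by (simp add: p(2) matrix_mul_assoc)
    then have "M = (r ** q) ** A" by (simp add: q(2) r(2))
    then show "M \<in> Pcoset A" unfolding Pcoset_def using r(1) q(1) Pgrp_mult by blast
  qed
  ultimately show "Pcoset A = Pcoset B" by blast
qed

lemma ract_Pcoset: "ract (Pcoset A) g = Pcoset (A ** g)"
  unfolding ract_def Pcoset_def by (auto simp: image_Collect matrix_mul_assoc)

lemma act_Pcosets: "act (Pcoset A, Pcoset B, Pcoset C) g = (Pcoset (A ** g), Pcoset (B ** g), Pcoset (C ** g))"
  by (simp add: act_def ract_Pcoset)

lemma act_mult: "act (act x g) h = act x (g ** h)"
  by (cases x) (simp add: act_def ract_def image_image matrix_mul_assoc)

lemma act_one: "act x (mat 1) = x"
  by (cases x) (simp add: act_def ract_def)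

lemma orbit_act:
  assumes g: "g \<in> SL3"
  shows "orbit (act x g) = orbit x"
proof
  show "orbit (act x g) \<subseteq> orbit x"
  proof
    fix y assume "y \<in> orbit (act x g)"
    then obtain k where k: "k \<in> SL3" "y = act x (g ** k)"
      unfolding orbit_def by (auto simp: act_mult)
    then show "y \<in> orbit x" unfolding orbit_def using SL3_mult[OF g k(1)] by blast
  qed
  obtain h where h: "h \<in> SL3" "g ** h = mat 1" using SL3_inverse[OF g] by blast
  show "orbit x \<subseteq> orbit (act x g)"
  proof
    fix y assume "y \<in> orbit x"
    then obtain k where k: "k \<in> SL3" "y = act x k" unfolding orbit_def by blast
    then have "y = act (act x g) (h ** k)" by (simp add: act_mult matrix_mul_assoc h(2))
    then show "y \<in> orbit (act x g)" unfolding orbit_def using SL3_mult[OF h(1) k(1)] by blast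
  qed
qed

lemma orbit_self: "x \<in> orbit x"
  unfolding orbit_def by (rule CollectI, rule exI[of _ "mat 1"]) (simp add: act_one SL3_def)

lemma orbit_eq_if_mem:
  assumes "y \<in> orbit x"
  shows "orbit y = orbit x"
proof -
  obtain g where "g \<in> SL3" "y = act x g" using assms unfolding orbit_def by blast
  then show ?thesis by (simp add: orbit_act)
qed

lemma orbits_disjoint_iff: "orbit x \<inter> orbit y = {} \<longleftrightarrow> y \<notin> orbit x"
proof
  assume "orbit x \<inter> orbit y = {}"
  then show "y \<notin> orbit x" using orbit_self[of y] by blast
next
  assume y: "y \<notin> orbit x"
  show "orbit x \<inter> orbit y = {}"
  proof (rule ccontr)
    assume "orbit x \<inter> orbit y \<noteq> {}"
    then obtain z where "z \<in> orbit x" "z \<in> orbit y" by blast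
    then have "orbit x = orbit y" using orbit_eq_if_mem by metis
    then show False using y orbit_self[of y] by simp
  qed
qed

subsection \<open>Orbits and stabilisers in a cell\<close>

text \<open>\<open>Pstab u\<close> is \<open>P \<inter> u\<inverse>Pu\<close>, the stabiliser of the coset \<open>Pu\<close> in \<open>P\<close>.\<close>

definition Pstab :: "m3 \<Rightarrow> m3 set" where
  "Pstab u = {g \<in> Pgrp. \<exists>p\<in>Pgrp. u ** g = p ** u}"

lemma Pstab_iff_conj:
  assumes "u ** u' = mat 1"
  shows "g \<in> Pstab u \<longleftrightarrow> g \<in> Pgrp \<and> u ** g ** u' \<in> Pgrp"
proof -
  have u'u: "u' ** u = mat 1" using assms matrix_left_right_inverse by blast
  have "u ** g = p ** u \<longleftrightarrow> u ** g ** u' = p" for p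
  proof
    assume "u ** g = p ** u"
    then show "u ** g ** u' = p" by (simp add: assms flip: matrix_mul_assoc)
  next
    assume "u ** g ** u' = p"
    then have "p ** u = u ** g ** (u' ** u)" by (simp add: matrix_mul_assoc)
    then show "u ** g = p ** u" by (simp add: u'u)
  qed
  then show ?thesis unfolding Pstab_def by auto
qed

lemma Pstab_one: "Pstab (mat 1) = Pgrp"
  unfolding Pstab_def by (force simp: matrix_mul_lid)

lemma act_base_eq_iff:
  "act (base v w n) g = base v w n' \<longleftrightarrow> g \<in> Pstab v \<and> (\<exists>m\<in>Pgrp. w ** n ** g = m ** w ** n')"
  by (simp add: base_def act_Pcosets Pcoset_eq_iff Pstab_def matrix_mul_assoc)

lemma stab_base: "stab (base v w n) = Pstab v \<inter> Pstab (w ** n)"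
  unfolding stab_def act_base_eq_iff using Pgrp_subset_SL3
  by (auto simp: Pstab_def matrix_mul_assoc)

lemma base_in_orbit_base_iff:
  "base v w n' \<in> orbit (base v w n) \<longleftrightarrow> (\<exists>r\<in>Pstab v. \<exists>m\<in>Pgrp. w ** n ** r = m ** w ** n')"
proof -
  have "Pstab v \<subseteq> SL3" unfolding Pstab_def using Pgrp_subset_SL3 by blast
  moreover have "base v w n' \<in> orbit (base v w n) \<longleftrightarrow> (\<exists>g\<in>SL3. act (base v w n) g = base v w n')"
    unfolding orbit_def by (auto intro: sym)
  ultimately show ?thesis unfolding act_base_eq_iff by blast
qed

lemma PvP_cosets_eq: "PvP_cosets v = {Pcoset (v ** p) | p. p \<in> Pgrp}"
proof -
  have "Pcoset (p ** v ** q) = Pcoset (v ** q)" if "p \<in> Pgrp" for p q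
    using that by (auto simp: Pcoset_eq_iff matrix_mul_assoc)
  then show ?thesis
    unfolding PvP_cosets_def setmul_def using Pgrp_one by auto
qed

lemma cell_eq_UN_orbits: "cell v w = (\<Union>u\<in>Pgrp. orbit (base v w u))"
proof
  show "cell v w \<subseteq> (\<Union>u\<in>Pgrp. orbit (base v w u))"
  proof
    fix X assume "X \<in> cell v w"
    then obtain p p' g where pp': "p \<in> Pgrp" "p' \<in> Pgrp" "g \<in> SL3"
      and X: "X = act (Pcoset (mat 1), Pcoset (v ** p), Pcoset (w ** p')) g"
      unfolding cell_def PvP_cosets_eq by blast
    obtain q where q: "q \<in> Pgrp" "q ** p = mat 1" using Pgrp_inverse[OF pp'(1)] .
    have "Pcoset p = Pcoset (mat 1)" using pp'(1) by (auto simp: Pcoset_eq_iff)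
    moreover have "w ** (p' ** q) ** p = w ** p'" by (simp add: q(2) flip: matrix_mul_assoc)
    ultimately have "X = act (base v w (p' ** q)) (p ** g)"
      by (simp add: X base_def act_Pcosets flip: act_mult)
    moreover have "p ** g \<in> SL3" using pp' Pgrp_subset_SL3 SL3_mult by blast
    ultimately show "X \<in> (\<Union>u\<in>Pgrp. orbit (base v w u))"
      unfolding orbit_def using Pgrp_mult[OF pp'(2) q(1)] by blast
  qed
  show "(\<Union>u\<in>Pgrp. orbit (base v w u)) \<subseteq> cell v w"
  proof
    fix X assume "X \<in> (\<Union>u\<in>Pgrp. orbit (base v w u))"
    then obtain u g where "u \<in> Pgrp" "g \<in> SL3" "X = act (base v w u) g"
      unfolding orbit_def by blast
    moreover have "Pcoset v \<in> PvP_cosets v" unfolding PvP_cosets_eq using Pgrp_one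
      by (metis (mono_tags, lifting) matrix_mul_rid mem_Collect_eq)
    ultimately show "X \<in> cell v w"
      unfolding cell_def base_def PvP_cosets_eq by blast
  qed
qed

lemma cell_eq_orbits_of_normal_forms:
  assumes "N \<subseteq> Pgrp"
    and "\<And>u. u \<in> Pgrp \<Longrightarrow> \<exists>n\<in>N. \<exists>r\<in>Pstab v. \<exists>m\<in>Pgrp. w ** u ** r = m ** w ** n"
  shows "cell v w = (\<Union>n\<in>N. orbit (base v w n))"
proof -
  have "\<exists>n\<in>N. orbit (base v w u) = orbit (base v w n)" if "u \<in> Pgrp" for u
    using assms(2)[OF that] base_in_orbit_base_iff orbit_eq_if_mem by metis
  then show ?thesis unfolding cell_eq_UN_orbits using assms(1) by blast
qed

subsection \<open>The cells S(z1, w)\<close>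

lemma z1_z2_inverse: "z1 ** z2 = mat 1"
  by (simp add: z1_def z2_def mat3_mult mat1_eq_mat3)

lemma z2_z1_inverse: "z2 ** z1 = mat 1"
  using z1_z2_inverse matrix_left_right_inverse by blast

lemma s1_inverse: "s1 ** s1 = mat 1"
  by (simp add: s1_def mat3_mult mat1_eq_mat3)

lemma s2_inverse: "s2 ** s2 = mat 1"
  by (simp add: s2_def mat3_mult mat1_eq_mat3)

lemma nmat_inverse: "nmat x y z ** nmat (-x) (x*z - y) (-z) = mat 1"
  by (simp add: nmat_def mat3_mult mat1_eq_mat3)

lemma right_inverse_mult:
  fixes u u' v v' :: m3
  assumes "u ** u' = mat 1" "v ** v' = mat 1"
  shows "u ** v ** (v' ** u') = mat 1"
proof -
  have "u ** v ** (v' ** u') = u ** (v ** v') ** u'" by (simp add: matrix_mul_assoc)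
  then show ?thesis by (simp add: assms)
qed

lemma nmat_in_Pgrp: "nmat x y z \<in> Pgrp"
  by (simp add: nmat_def Pgrp_mat3_iff)

lemma Pstab_z1: "Pstab z1 = {mat3 a 0 0 0 b z 0 0 c | a b c z. a*b*c = 1}"
  unfolding set_eq_iff Pstab_iff_conj[OF z1_z2_inverse]
  by (auto simp: z1_def z2_def mat3_mult Pgrp_mat3_iff mult_ac elim!: PgrpE)

lemma nmat_zero: "nmat 0 0 0 = mat 1"
  by (simp add: nmat_def mat1_eq_mat3)

lemma Dgrp_eq: "Dgrp = {mat3 a 0 0 0 b 0 0 0 c | a b c. a*b*c = 1}"
  unfolding Dgrp_def dmat_def by blast

lemma setmul_Dgrp_root23: "setmul Dgrp {nmat 0 0 x | x. True} = Pstab z1"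
proof (intro set_eqI iffI)
  fix g assume "g \<in> setmul Dgrp {nmat 0 0 x | x. True}"
  then obtain a b c x where "a*b*c = 1" "g = dmat a b c ** nmat 0 0 x"
    unfolding setmul_def Dgrp_def by blast
  then show "g \<in> Pstab z1" by (auto simp: Pstab_z1 dmat_def nmat_def mat3_mult)
next
  fix g assume "g \<in> Pstab z1"
  then obtain a b c z where abc: "a*b*c = 1" "g = mat3 a 0 0 0 b z 0 0 c"
    unfolding Pstab_z1 by blast
  then have "g = dmat a b c ** nmat 0 0 (z/b)" by (auto simp: dmat_def nmat_def mat3_mult)
  then show "g \<in> setmul Dgrp {nmat 0 0 x | x. True}"
    unfolding setmul_def Dgrp_def using abc(1) by blast
qed

lemmas explicit_matrix_defs = z1_def z2_def s1_def s2_def nmat_def dmat_def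

lemma stab_z1_z1_n100: "stab (base z1 z1 (nmat 1 0 0)) = {dmat a a (1 / a^2) | a. a \<noteq> 0}"
  unfolding stab_base Pstab_z1 set_eq_iff Int_iff
    Pstab_iff_conj[OF right_inverse_mult[OF z1_z2_inverse nmat_inverse]]
  by (auto simp: explicit_matrix_defs mat3_mult Pgrp_mat3_iff power2_eq_square)
    (auto simp: divide_simps mult_ac)

lemma stab_z1_z1_n010: "stab (base z1 z1 (nmat 0 1 0)) = {mat3 a 0 0 0 (1 / a^2) x 0 0 a | a x. a \<noteq> 0}"
  unfolding stab_base Pstab_z1 set_eq_iff Int_iff
    Pstab_iff_conj[OF right_inverse_mult[OF z1_z2_inverse nmat_inverse]]
  by (auto simp: explicit_matrix_defs mat3_mult Pgrp_mat3_iff power2_eq_square)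
    (auto simp: divide_simps mult_ac)

lemma stab_z1_z1_n000: "stab (base z1 z1 (nmat 0 0 0)) = setmul Dgrp {nmat 0 0 x | x. True}"
  unfolding stab_base setmul_Dgrp_root23 nmat_zero by simp

lemma stab_z1_z2_n010: "stab (base z1 z2 (nmat 0 1 0)) = {dmat a (1 / a^2) a | a. a \<noteq> 0}"
  unfolding stab_base Pstab_z1 set_eq_iff Int_iff
    Pstab_iff_conj[OF right_inverse_mult[OF z2_z1_inverse nmat_inverse]]
  by (auto simp: explicit_matrix_defs mat3_mult Pgrp_mat3_iff power2_eq_square)
    (auto simp: divide_simps mult_ac)

lemma stab_z1_z2_n000: "stab (base z1 z2 (nmat 0 0 0)) = Dgrp"
  unfolding stab_base Pstab_z1 Dgrp_eq set_eq_iff Int_iff nmat_zero matrix_mul_rid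
    Pstab_iff_conj[OF z2_z1_inverse]
  by (auto simp: explicit_matrix_defs mat3_mult Pgrp_mat3_iff mult_ac)

lemma stab_z1_s1_n100: "stab (base z1 s1 (nmat 1 0 0)) = {mat3 a 0 0 0 a x 0 0 (1 / a^2) | a x. a \<noteq> 0}"
  unfolding stab_base Pstab_z1 set_eq_iff Int_iff
    Pstab_iff_conj[OF right_inverse_mult[OF s1_inverse nmat_inverse]]
  by (auto simp: explicit_matrix_defs mat3_mult Pgrp_mat3_iff power2_eq_square)
    (auto simp: divide_simps mult_ac)

lemma stab_z1_s1_n000: "stab (base z1 s1 (nmat 0 0 0)) = setmul Dgrp {nmat 0 0 x | x. True}"
  unfolding stab_base setmul_Dgrp_root23 Pstab_z1 set_eq_iff Int_iff nmat_zero matrix_mul_rid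
    Pstab_iff_conj[OF s1_inverse]
  by (auto simp: explicit_matrix_defs mat3_mult Pgrp_mat3_iff mult_ac)

lemma stab_z1_s2: "stab (base z1 s2 (mat 1)) = Dgrp"
  unfolding stab_base Pstab_z1 Dgrp_eq set_eq_iff Int_iff matrix_mul_rid
    Pstab_iff_conj[OF s2_inverse]
  by (auto simp: explicit_matrix_defs mat3_mult Pgrp_mat3_iff mult_ac)

lemma stab_z1_one: "stab (base z1 (mat 1) (mat 1)) = setmul Dgrp {nmat 0 0 x | x. True}"
  unfolding stab_base setmul_Dgrp_root23 Pstab_one matrix_mul_lid Pstab_z1 by (auto simp: Pgrp_mat3_iff)

lemma disjoint_orbits_z1_z1:
  "orbit (base z1 z1 (nmat 1 0 0)) \<inter> orbit (base z1 z1 (nmat 0 1 0)) = {}"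
  "orbit (base z1 z1 (nmat 1 0 0)) \<inter> orbit (base z1 z1 (nmat 0 0 0)) = {}"
  "orbit (base z1 z1 (nmat 0 1 0)) \<inter> orbit (base z1 z1 (nmat 0 0 0)) = {}"
  unfolding orbits_disjoint_iff base_in_orbit_base_iff Pstab_z1
  by (auto simp: explicit_matrix_defs mat3_mult elim!: PgrpE)

lemma disjoint_orbits_z1_z2:
  "orbit (base z1 z2 (nmat 0 1 0)) \<inter> orbit (base z1 z2 (nmat 0 0 0)) = {}"
  unfolding orbits_disjoint_iff base_in_orbit_base_iff Pstab_z1
  by (auto simp: explicit_matrix_defs mat3_mult elim!: PgrpE)

lemma disjoint_orbits_z1_s1:
  "orbit (base z1 s1 (nmat 1 0 0)) \<inter> orbit (base z1 s1 (nmat 0 0 0)) = {}"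
  unfolding orbits_disjoint_iff base_in_orbit_base_iff Pstab_z1
  by (auto simp: explicit_matrix_defs mat3_mult elim!: PgrpE)

lemma normal_form_z1_z1:
  assumes "u \<in> Pgrp"
  shows "\<exists>n\<in>{nmat 1 0 0, nmat 0 1 0, nmat 0 0 0}. \<exists>r\<in>Pstab z1. \<exists>m\<in>Pgrp.
           z1 ** u ** r = m ** z1 ** n"
proof -
  obtain a x y b z where nz: "a \<noteq> 0" "b \<noteq> 0" and u: "u = mat3 a x y 0 b z 0 0 (1/(a*b))"
    using assms by (rule PgrpE_nonzero)
  define c where "c = 1/(a*b)"
  consider "x \<noteq> 0" | "x = 0" "y \<noteq> 0" | "x = 0" "y = 0" by blast
  then show ?thesis
  proof cases
    case 1
    let ?r = "mat3 1 0 0 0 (a/x) (-y/a) 0 0 (x/a)"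
    let ?m = "mat3 (b*a/x) ((z*x - b*y)/a) 0 0 (c*x/a) 0 0 0 a"
    have "?r \<in> Pstab z1" using 1 nz by (simp add: Pstab_z1)
    moreover have "?m \<in> Pgrp" "z1 ** u ** ?r = ?m ** z1 ** nmat 1 0 0"
      using 1 nz by (simp_all add: Pgrp_mat3_iff u c_def explicit_matrix_defs mat3_mult field_simps)
    ultimately show ?thesis by blast
  next
    case 2
    let ?r = "mat3 1 0 0 0 (y/a) 0 0 0 (a/y)"
    let ?m = "mat3 (b*y/a) (z*a/y) 0 0 (c*a/y) 0 0 0 a"
    have "?r \<in> Pstab z1" using 2 nz by (simp add: Pstab_z1)
    moreover have "?m \<in> Pgrp" "z1 ** u ** ?r = ?m ** z1 ** nmat 0 1 0"
      using 2 nz by (simp_all add: Pgrp_mat3_iff u c_def explicit_matrix_defs mat3_mult field_simps)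
    ultimately show ?thesis by blast
  next
    case 3
    let ?m = "mat3 b z 0 0 c 0 0 0 a"
    have "mat 1 \<in> Pstab z1" by (simp add: Pstab_z1 mat1_eq_mat3)
    moreover have "?m \<in> Pgrp" "z1 ** u ** mat 1 = ?m ** z1 ** nmat 0 0 0"
      using 3 nz by (simp_all add: Pgrp_mat3_iff mat1_eq_mat3 u c_def explicit_matrix_defs mat3_mult field_simps)
    ultimately show ?thesis by blast
  qed
qed

lemma normal_form_z1_z2:
  assumes "u \<in> Pgrp"
  shows "\<exists>n\<in>{nmat 0 1 0, nmat 0 0 0}. \<exists>r\<in>Pstab z1. \<exists>m\<in>Pgrp. z2 ** u ** r = m ** z2 ** n"
proof -
  obtain a x y b z where nz: "a \<noteq> 0" "b \<noteq> 0" and u: "u = mat3 a x y 0 b z 0 0 (1/(a*b))"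
    using assms by (rule PgrpE_nonzero)
  define c where "c = 1/(a*b)"
  define d where "d = b*y - x*z"
  have y: "y = (d + x*z)/b" using nz(2) by (simp add: d_def field_simps)
  show ?thesis
  proof (cases "d = 0")
    case False
    let ?r = "mat3 1 0 0 0 (d/(a*b)) (-z*a/d) 0 0 (a*b/d)"
    let ?m = "mat3 (c*a*b/d) 0 0 0 a (x*d/(a*b)) 0 0 (d/a)"
    have "?r \<in> Pstab z1" using False nz by (simp add: Pstab_z1)
    moreover have "?m \<in> Pgrp" "z2 ** u ** ?r = ?m ** z2 ** nmat 0 1 0"
      using False nz by (simp_all add: Pgrp_mat3_iff u c_def y explicit_matrix_defs mat3_mult field_simps)
    ultimately show ?thesis by blast
  next
    case True
    let ?r = "mat3 1 0 0 0 1 (-z/b) 0 0 1"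
    let ?m = "mat3 c 0 0 0 a x 0 0 b"
    have "?r \<in> Pstab z1" using nz by (simp add: Pstab_z1)
    moreover have "?m \<in> Pgrp" "z2 ** u ** ?r = ?m ** z2 ** nmat 0 0 0"
      using True nz by (simp_all add: Pgrp_mat3_iff u c_def y explicit_matrix_defs mat3_mult field_simps)
    ultimately show ?thesis by blast
  qed
qed

lemma normal_form_z1_s1:
  assumes "u \<in> Pgrp"
  shows "\<exists>n\<in>{nmat 1 0 0, nmat 0 0 0}. \<exists>r\<in>Pstab z1. \<exists>m\<in>Pgrp. s1 ** u ** r = m ** s1 ** n"
proof -
  obtain a x y b z where nz: "a \<noteq> 0" "b \<noteq> 0" and u: "u = mat3 a x y 0 b z 0 0 (1/(a*b))"
    using assms by (rule PgrpE_nonzero)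
  define c where "c = 1/(a*b)"
  show ?thesis
  proof (cases "x = 0")
    case False
    let ?r = "mat3 1 0 0 0 (a/x) 0 0 0 (x/a)"
    let ?m = "mat3 (b*a/x) 0 (-(z*x/a)) 0 a (-(y*x/a)) 0 0 (c*x/a)"
    have "?r \<in> Pstab z1" using False nz by (simp add: Pstab_z1)
    moreover have "?m \<in> Pgrp" "s1 ** u ** ?r = ?m ** s1 ** nmat 1 0 0"
      using False nz by (simp_all add: Pgrp_mat3_iff u c_def explicit_matrix_defs mat3_mult field_simps)
    ultimately show ?thesis by blast
  next
    case True
    let ?m = "mat3 b 0 (-z) 0 a (-y) 0 0 c"
    have "mat 1 \<in> Pstab z1" by (simp add: Pstab_z1 mat1_eq_mat3)
    moreover have "?m \<in> Pgrp" "s1 ** u ** mat 1 = ?m ** s1 ** nmat 0 0 0"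
      using True nz by (simp_all add: Pgrp_mat3_iff mat1_eq_mat3 u c_def explicit_matrix_defs mat3_mult field_simps)
    ultimately show ?thesis by blast
  qed
qed

lemma normal_form_z1_s2:
  assumes "u \<in> Pgrp"
  shows "\<exists>n\<in>{mat 1}. \<exists>r\<in>Pstab z1. \<exists>m\<in>Pgrp. s2 ** u ** r = m ** s2 ** n"
proof -
  obtain a x y b z where nz: "a \<noteq> 0" "b \<noteq> 0" and u: "u = mat3 a x y 0 b z 0 0 (1/(a*b))"
    using assms by (rule PgrpE_nonzero)
  define c where "c = 1/(a*b)"
  let ?r = "mat3 1 0 0 0 1 (-z/b) 0 0 1"
  let ?m = "mat3 a (x*z/b - y) (-x) 0 c 0 0 0 b"
  have "?r \<in> Pstab z1" using nz by (simp add: Pstab_z1)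
  moreover have "?m \<in> Pgrp" "s2 ** u ** ?r = ?m ** s2 ** mat 1"
    using nz by (simp_all add: Pgrp_mat3_iff mat1_eq_mat3 u c_def explicit_matrix_defs mat3_mult field_simps)
  ultimately show ?thesis by blast
qed

lemma normal_form_z1_one:
  assumes "u \<in> Pgrp"
  shows "\<exists>n\<in>{mat 1}. \<exists>r\<in>Pstab z1. \<exists>m\<in>Pgrp. mat 1 ** u ** r = m ** mat 1 ** n"
proof -
  have "mat 1 \<in> Pstab z1" by (simp add: Pstab_z1 mat1_eq_mat3)
  then show ?thesis using assms by force
qed

subsection \<open>Lie algebras and orbit dimensions\<close>

lemma lie_alg_memI:
  assumes "\<gamma> 0 = mat 1" "\<And>t. \<gamma> t \<in> H" "(\<gamma> has_vector_derivative X) (at 0)"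
  shows "X \<in> lie_alg H"
  using assms unfolding lie_alg_def by blast

lemma lie_alg_linear_constraint:
  fixes \<phi> :: "m3 \<Rightarrow> 'b::real_normed_vector"
  assumes "linear \<phi>" "X \<in> lie_alg H" "\<And>M. M \<in> H \<Longrightarrow> \<phi> M = \<phi> (mat 1)"
  shows "\<phi> X = 0"
proof -
  obtain \<gamma> where \<gamma>: "\<forall>t. \<gamma> t \<in> H" "(\<gamma> has_vector_derivative X) (at 0)"
    using assms(2) unfolding lie_alg_def by blast
  have "((\<lambda>t. \<phi> (\<gamma> t)) has_vector_derivative \<phi> X) (at 0)"
    using bounded_linear.has_vector_derivative[OF _ \<gamma>(2)] assms(1)
    by (simp add: linear_conv_bounded_linear)
  moreover have "(\<lambda>t. \<phi> (\<gamma> t)) = (\<lambda>t. \<phi> (mat 1))" using \<gamma>(1) assms(3) by simp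
  ultimately show ?thesis
    using vector_derivative_unique_at has_vector_derivative_const by metis
qed

lemma entry_has_real_derivative:
  fixes i j :: 3
  assumes "(\<gamma> has_vector_derivative X) (at 0)"
  shows "((\<lambda>t. \<gamma> t $ i $ j) has_real_derivative X $ i $ j) (at 0)"
proof -
  have "bounded_linear (\<lambda>M::m3. M $ i $ j)"
    using bounded_linear_compose[OF bounded_linear_vec_nth bounded_linear_vec_nth] by blast
  from bounded_linear.has_vector_derivative[OF this assms] show ?thesis
    unfolding has_real_derivative_iff_has_vector_derivative .
qed

lemma lie_alg_trace_zero:
  assumes "X \<in> lie_alg H" "H \<subseteq> SL3"
  shows "X $ 1 $ 1 + X $ 2 $ 2 + X $ 3 $ 3 = 0"
proof -
  obtain \<gamma> where \<gamma>: "\<gamma> 0 = mat 1" "\<forall>t. \<gamma> t \<in> H" "(\<gamma> has_vector_derivative X) (at 0)"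
    using assms(1) unfolding lie_alg_def by blast
  note d = entry_has_real_derivative[OF \<gamma>(3)]
  have "((\<lambda>t. det (\<gamma> t)) has_real_derivative X $ 1 $ 1 + X $ 2 $ 2 + X $ 3 $ 3) (at 0)"
    unfolding det_3 using \<gamma>(1)
    by (auto intro!: derivative_eq_intros d simp: mat1_eq_mat3)
  moreover have "(\<lambda>t. det (\<gamma> t)) = (\<lambda>t. 1)" using \<gamma>(2) assms(2) by (auto simp: SL3_def)
  ultimately show ?thesis using DERIV_const DERIV_unique by metis
qed

lemma diag_exp_in_lie_alg:
  assumes "\<And>t. mat3 (exp (p*t)) 0 0 0 (exp (q*t)) 0 0 0 (exp (r*t)) \<in> H"
  shows "mat3 p 0 0 0 q 0 0 0 r \<in> lie_alg H"
proof (rule lie_alg_memI[OF _ assms])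
  have diag_sum: "mat3 a 0 0 0 b 0 0 0 c =
      a *\<^sub>R mat3 1 0 0 0 0 0 0 0 0 + b *\<^sub>R mat3 0 0 0 0 1 0 0 0 0 + c *\<^sub>R mat3 0 0 0 0 0 0 0 0 1"
    for a b c by (simp add: mat3_scaleR mat3_add)
  show "mat3 (exp (p*0)) 0 0 0 (exp (q*0)) 0 0 0 (exp (r*0)) = mat 1"
    by (simp add: mat1_eq_mat3)
  show "((\<lambda>t. mat3 (exp (p*t)) 0 0 0 (exp (q*t)) 0 0 0 (exp (r*t))) has_vector_derivative
      mat3 p 0 0 0 q 0 0 0 r) (at 0)"
    unfolding diag_sum[of "exp _"] diag_sum[of p]
    by (auto intro!: derivative_eq_intros)
qed

lemma unipotent_in_lie_alg:
  assumes "\<And>t. mat 1 + t *\<^sub>R E \<in> H"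
  shows "E \<in> lie_alg H"
  by (rule lie_alg_memI[OF _ assms]) (auto intro!: derivative_eq_intros)

lemma lie_dim_eqI:
  fixes f :: "'a::euclidean_space \<Rightarrow> m3"
  assumes "linear f" "inj f" "lie_alg H \<subseteq> range f" "f ` Basis \<subseteq> lie_alg H"
  shows "lie_dim H = DIM('a)"
proof -
  have "range f = span (f ` Basis)"
    using span_linear_image[OF assms(1)] by (simp add: span_Basis)
  then have "span (lie_alg H) = range f"
    using span_minimal[OF assms(3) linear_subspace_image[OF assms(1) subspace_UNIV]]
      span_mono[OF assms(4)] by auto
  then have "lie_dim H = dim (range f)" unfolding lie_dim_def by (metis dim_span)
  also have "\<dots> = DIM('a)"
    using dim_image_eq[OF assms(1)] assms(2) by (metis dim_UNIV inj_on_subset subset_UNIV)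
  finally show ?thesis .
qed

lemma lie_alg_subset_range:
  fixes \<phi> :: "m3 \<Rightarrow> 'b::real_normed_vector"
  assumes "H \<subseteq> SL3" "linear \<phi>" "\<And>M. M \<in> H \<Longrightarrow> \<phi> M = \<phi> (mat 1)"
    and "\<And>X. \<phi> X = 0 \<Longrightarrow> X $ 1 $ 1 + X $ 2 $ 2 + X $ 3 $ 3 = 0 \<Longrightarrow> X = f (g X)"
  shows "lie_alg H \<subseteq> range f"
proof
  fix X assume X: "X \<in> lie_alg H"
  have "X = f (g X)"
    using assms(4) lie_alg_linear_constraint[OF assms(2) X assms(3)] lie_alg_trace_zero[OF X assms(1)]
    by blast
  then show "X \<in> range f" by blast
qed

lemma exp_minus_2: "exp (- (2 * t)) = 1 / exp t ^ 2" for t :: real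
proof -
  have "exp (2 * t) = exp t ^ 2" by (simp add: exp_of_nat_mult[symmetric])
  then show ?thesis by (simp add: exp_minus inverse_eq_divide)
qed

lemma lie_dim_SL3: "lie_dim SL3 = 8"
proof -
  define f :: "real \<times> real \<times> real \<times> real \<times> real \<times> real \<times> real \<times> real \<Rightarrow> m3"
    where "f = (\<lambda>(a, b, c, d, e, g, h, k). mat3 a b c d e g h k (-(a+e)))"
  have "linear f"
    by (simp add: linear_iff f_def split_paired_all mat3_add mat3_scaleR algebra_simps)
  moreover have "inj f" by (simp add: inj_def f_def split_paired_all)
  moreover have "lie_alg SL3 \<subseteq> range f"
  proof
    fix X assume "X \<in> lie_alg SL3"
    then have "X $ 3 $ 3 = -(X $ 1 $ 1 + X $ 2 $ 2)" using lie_alg_trace_zero by force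
    then have "X = f (X$1$1, X$1$2, X$1$3, X$2$1, X$2$2, X$2$3, X$3$1, X$3$2)"
      unfolding f_def by (subst mat3_eta) simp
    then show "X \<in> range f" by blast
  qed
  moreover have "f ` Basis \<subseteq> lie_alg SL3"
  proof -
    have "mat3 1 0 0 0 0 0 0 0 (-1) \<in> lie_alg SL3" "mat3 0 0 0 0 1 0 0 0 (-1) \<in> lie_alg SL3"
      by (auto intro!: diag_exp_in_lie_alg simp: SL3_def det_mat3 exp_minus)
    moreover have "E \<in> lie_alg SL3"
      if "E \<in> {mat3 0 1 0 0 0 0 0 0 0, mat3 0 0 1 0 0 0 0 0 0, mat3 0 0 0 1 0 0 0 0 0,
                 mat3 0 0 0 0 0 1 0 0 0, mat3 0 0 0 0 0 0 1 0 0, mat3 0 0 0 0 0 0 0 1 0}" for E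
      using that by (auto intro!: unipotent_in_lie_alg simp: SL3_def det_mat3 mat1_eq_mat3 mat3_scaleR mat3_add)
    ultimately show ?thesis by (simp add: Basis_prod_def zero_prod_def f_def)
  qed
  ultimately show ?thesis using lie_dim_eqI[of f] by simp
qed

lemma lie_dim_dmat_a_a_inv: "lie_dim {dmat a a (1 / a^2) | a. a \<noteq> 0} = 1"
proof -
  let ?H = "{dmat a a (1 / a^2) | a. a \<noteq> 0}"
  define f :: "real \<Rightarrow> m3" where "f = (\<lambda>a. mat3 a 0 0 0 a 0 0 0 (-2 * a))"
  have "linear f" by (simp add: linear_iff f_def mat3_add mat3_scaleR algebra_simps)
  moreover have "inj f" by (simp add: inj_def f_def)
  moreover have "lie_alg ?H \<subseteq> range f"
    by (rule lie_alg_subset_range[where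
          \<phi> = "\<lambda>X. (X$1$2, X$1$3, X$2$1, X$2$3, X$3$1, X$3$2, X$1$1 - X$2$2)" and g = "\<lambda>X. X$1$1"])
      (auto simp: SL3_def dmat_def det_mat3 linear_iff mat1_eq_mat3 zero_prod_def f_def
        power2_eq_square algebra_simps, subst mat3_eta, simp)
  moreover have "f ` Basis \<subseteq> lie_alg ?H"
    by (auto simp: f_def dmat_def exp_minus_2 intro!: diag_exp_in_lie_alg)
  ultimately show ?thesis using lie_dim_eqI[of f] by simp
qed

lemma lie_dim_dmat_a_inv_a: "lie_dim {dmat a (1 / a^2) a | a. a \<noteq> 0} = 1"
proof -
  let ?H = "{dmat a (1 / a^2) a | a. a \<noteq> 0}"
  define f :: "real \<Rightarrow> m3" where "f = (\<lambda>a. mat3 a 0 0 0 (-2 * a) 0 0 0 a)"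
  have "linear f" by (simp add: linear_iff f_def mat3_add mat3_scaleR algebra_simps)
  moreover have "inj f" by (simp add: inj_def f_def)
  moreover have "lie_alg ?H \<subseteq> range f"
    by (rule lie_alg_subset_range[where
          \<phi> = "\<lambda>X. (X$1$2, X$1$3, X$2$1, X$2$3, X$3$1, X$3$2, X$1$1 - X$3$3)" and g = "\<lambda>X. X$1$1"])
      (auto simp: SL3_def dmat_def det_mat3 linear_iff mat1_eq_mat3 zero_prod_def f_def
        power2_eq_square algebra_simps, subst mat3_eta, simp)
  moreover have "f ` Basis \<subseteq> lie_alg ?H"
    by (auto simp: f_def dmat_def exp_minus_2 intro!: diag_exp_in_lie_alg)
  ultimately show ?thesis using lie_dim_eqI[of f] by simp
qed

lemma lie_dim_dmat_a_a_inv_root23: "lie_dim {mat3 a 0 0 0 a x 0 0 (1 / a^2) | a x. a \<noteq> 0} = 2"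
proof -
  let ?H = "{mat3 a 0 0 0 a x 0 0 (1 / a^2) | a x. a \<noteq> 0}"
  define f :: "real \<times> real \<Rightarrow> m3" where "f = (\<lambda>(a, u). mat3 a 0 0 0 a u 0 0 (-2 * a))"
  have "linear f" by (simp add: linear_iff f_def split_paired_all mat3_add mat3_scaleR algebra_simps)
  moreover have "inj f" by (simp add: inj_def f_def split_paired_all)
  moreover have "lie_alg ?H \<subseteq> range f"
    by (rule lie_alg_subset_range[where
          \<phi> = "\<lambda>X. (X$1$2, X$1$3, X$2$1, X$3$1, X$3$2, X$1$1 - X$2$2)" and g = "\<lambda>X. (X$1$1, X$2$3)"])
      (auto simp: SL3_def det_mat3 linear_iff mat1_eq_mat3 zero_prod_def f_def
        power2_eq_square algebra_simps, subst mat3_eta, simp)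
  moreover have "f ` Basis \<subseteq> lie_alg ?H"
  proof -
    have "mat3 1 0 0 0 1 0 0 0 (-2) \<in> lie_alg ?H"
      by (auto simp: exp_minus_2 intro!: diag_exp_in_lie_alg)
    moreover have "mat3 0 0 0 0 0 1 0 0 0 \<in> lie_alg ?H"
      by (auto simp: mat1_eq_mat3 mat3_scaleR mat3_add intro!: unipotent_in_lie_alg)
    ultimately show ?thesis by (simp add: Basis_prod_def zero_prod_def f_def)
  qed
  ultimately show ?thesis using lie_dim_eqI[of f] by simp
qed

lemma lie_dim_dmat_a_inv_a_root23: "lie_dim {mat3 a 0 0 0 (1 / a^2) x 0 0 a | a x. a \<noteq> 0} = 2"
proof -
  let ?H = "{mat3 a 0 0 0 (1 / a^2) x 0 0 a | a x. a \<noteq> 0}"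
  define f :: "real \<times> real \<Rightarrow> m3" where "f = (\<lambda>(a, u). mat3 a 0 0 0 (-2 * a) u 0 0 a)"
  have "linear f" by (simp add: linear_iff f_def split_paired_all mat3_add mat3_scaleR algebra_simps)
  moreover have "inj f" by (simp add: inj_def f_def split_paired_all)
  moreover have "lie_alg ?H \<subseteq> range f"
    by (rule lie_alg_subset_range[where
          \<phi> = "\<lambda>X. (X$1$2, X$1$3, X$2$1, X$3$1, X$3$2, X$1$1 - X$3$3)" and g = "\<lambda>X. (X$1$1, X$2$3)"])
      (auto simp: SL3_def det_mat3 linear_iff mat1_eq_mat3 zero_prod_def f_def
        power2_eq_square algebra_simps, subst mat3_eta, simp)
  moreover have "f ` Basis \<subseteq> lie_alg ?H"
  proof -
    have "mat3 1 0 0 0 (-2) 0 0 0 1 \<in> lie_alg ?H"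
      by (auto simp: exp_minus_2 intro!: diag_exp_in_lie_alg)
    moreover have "mat3 0 0 0 0 0 1 0 0 0 \<in> lie_alg ?H"
      by (auto simp: mat1_eq_mat3 mat3_scaleR mat3_add intro!: unipotent_in_lie_alg)
    ultimately show ?thesis by (simp add: Basis_prod_def zero_prod_def f_def)
  qed
  ultimately show ?thesis using lie_dim_eqI[of f] by simp
qed

lemma lie_dim_Dgrp: "lie_dim Dgrp = 2"
proof -
  define f :: "real \<times> real \<Rightarrow> m3" where "f = (\<lambda>(a, b). mat3 a 0 0 0 b 0 0 0 (-(a + b)))"
  have "linear f" by (simp add: linear_iff f_def split_paired_all mat3_add mat3_scaleR algebra_simps)
  moreover have "inj f" by (simp add: inj_def f_def split_paired_all)
  moreover have "lie_alg Dgrp \<subseteq> range f"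
    unfolding Dgrp_eq
    by (rule lie_alg_subset_range[where
          \<phi> = "\<lambda>X. (X$1$2, X$1$3, X$2$1, X$2$3, X$3$1, X$3$2)" and g = "\<lambda>X. (X$1$1, X$2$2)"])
      (auto simp: SL3_def det_mat3 linear_iff mat1_eq_mat3 zero_prod_def f_def algebra_simps,
        subst mat3_eta, simp)
  moreover have "f ` Basis \<subseteq> lie_alg Dgrp"
    unfolding Dgrp_eq
    by (auto simp: Basis_prod_def zero_prod_def f_def exp_minus intro!: diag_exp_in_lie_alg)
  ultimately show ?thesis using lie_dim_eqI[of f] by simp
qed

lemma lie_dim_Dgrp_root23: "lie_dim (setmul Dgrp {nmat 0 0 x | x. True}) = 3"
proof -
  define f :: "real \<times> real \<times> real \<Rightarrow> m3"
    where "f = (\<lambda>(a, b, u). mat3 a 0 0 0 b u 0 0 (-(a + b)))"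
  have "linear f" by (simp add: linear_iff f_def split_paired_all mat3_add mat3_scaleR algebra_simps)
  moreover have "inj f" by (simp add: inj_def f_def split_paired_all)
  moreover have "lie_alg (Pstab z1) \<subseteq> range f"
    unfolding Pstab_z1
    by (rule lie_alg_subset_range[where
          \<phi> = "\<lambda>X. (X$1$2, X$1$3, X$2$1, X$3$1, X$3$2)" and g = "\<lambda>X. (X$1$1, X$2$2, X$2$3)"])
      (auto simp: SL3_def det_mat3 linear_iff mat1_eq_mat3 zero_prod_def f_def algebra_simps,
        subst mat3_eta, simp)
  moreover have "f ` Basis \<subseteq> lie_alg (Pstab z1)"
  proof -
    have "mat3 1 0 0 0 0 0 0 0 (-1) \<in> lie_alg (Pstab z1)" "mat3 0 0 0 0 1 0 0 0 (-1) \<in> lie_alg (Pstab z1)"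
      by (auto simp: Pstab_z1 exp_minus intro!: diag_exp_in_lie_alg)
    moreover have "mat3 0 0 0 0 0 1 0 0 0 \<in> lie_alg (Pstab z1)"
      by (auto simp: Pstab_z1 mat1_eq_mat3 mat3_scaleR mat3_add intro!: unipotent_in_lie_alg)
    ultimately show ?thesis by (simp add: Basis_prod_def zero_prod_def f_def)
  qed
  ultimately show ?thesis unfolding setmul_Dgrp_root23 using lie_dim_eqI[of f] by simp
qed

theorem mainTheorem9:
  shows
  "(let x1 = base z1 z1 (nmat 1 0 0); x2 = base z1 z1 (nmat 0 1 0); x3 = base z1 z1 (nmat 0 0 0) in
      cell z1 z1 = orbit x1 \<union> orbit x2 \<union> orbit x3
    \<and> orbit x1 \<inter> orbit x2 = {} \<and> orbit x1 \<inter> orbit x3 = {} \<and> orbit x2 \<inter> orbit x3 = {}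
    \<and> orbit_dim x1 = 7 \<and> stab x1 = {dmat a a (1 / a^2) | a. a \<noteq> 0}
    \<and> orbit_dim x2 = 6 \<and> stab x2 = {mat3 a 0 0 0 (1 / a^2) x 0 0 a | a x. a \<noteq> 0}
    \<and> orbit_dim x3 = 5 \<and> stab x3 = setmul Dgrp {nmat 0 0 x | x. True})
 \<and> (let x1 = base z1 z2 (nmat 0 1 0); x2 = base z1 z2 (nmat 0 0 0) in
      cell z1 z2 = orbit x1 \<union> orbit x2 \<and> orbit x1 \<inter> orbit x2 = {}
    \<and> orbit_dim x1 = 7 \<and> stab x1 = {dmat a (1 / a^2) a | a. a \<noteq> 0}
    \<and> orbit_dim x2 = 6 \<and> stab x2 = Dgrp)
 \<and> (let x1 = base z1 s1 (nmat 1 0 0); x2 = base z1 s1 (nmat 0 0 0) in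
      cell z1 s1 = orbit x1 \<union> orbit x2 \<and> orbit x1 \<inter> orbit x2 = {}
    \<and> orbit_dim x1 = 6 \<and> stab x1 = {mat3 a 0 0 0 a x 0 0 (1 / a^2) | a x. a \<noteq> 0}
    \<and> orbit_dim x2 = 5 \<and> stab x2 = setmul Dgrp {nmat 0 0 x | x. True})
 \<and> (let x1 = base z1 s2 (mat 1) in
      cell z1 s2 = orbit x1 \<and> orbit_dim x1 = 6 \<and> stab x1 = Dgrp)
 \<and> (let x1 = base z1 (mat 1) (mat 1) in
      cell z1 (mat 1) = orbit x1 \<and> orbit_dim x1 = 5
    \<and> stab x1 = setmul Dgrp {nmat 0 0 x | x. True})"
proof -
  have cells:
    "cell z1 z1 = (\<Union>n\<in>{nmat 1 0 0, nmat 0 1 0, nmat 0 0 0}. orbit (base z1 z1 n))"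
    "cell z1 z2 = (\<Union>n\<in>{nmat 0 1 0, nmat 0 0 0}. orbit (base z1 z2 n))"
    "cell z1 s1 = (\<Union>n\<in>{nmat 1 0 0, nmat 0 0 0}. orbit (base z1 s1 n))"
    "cell z1 s2 = (\<Union>n\<in>{mat 1}. orbit (base z1 s2 n))"
    "cell z1 (mat 1) = (\<Union>n\<in>{mat 1}. orbit (base z1 (mat 1) n))"
    by (intro cell_eq_orbits_of_normal_forms normal_form_z1_z1 normal_form_z1_z2
        normal_form_z1_s1 normal_form_z1_s2 normal_form_z1_one; simp add: nmat_in_Pgrp Pgrp_one)+
  note stabs = stab_z1_z1_n100 stab_z1_z1_n010 stab_z1_z1_n000 stab_z1_z2_n010 stab_z1_z2_n000
    stab_z1_s1_n100 stab_z1_s1_n000 stab_z1_s2 stab_z1_one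
  note lie_dims = lie_dim_SL3 lie_dim_dmat_a_a_inv lie_dim_dmat_a_inv_a lie_dim_dmat_a_a_inv_root23
    lie_dim_dmat_a_inv_a_root23 lie_dim_Dgrp lie_dim_Dgrp_root23
  show ?thesis
    unfolding Let_def orbit_dim_def stabs lie_dims cells
    using disjoint_orbits_z1_z1 disjoint_orbits_z1_z2 disjoint_orbits_z1_s1 by (simp add: Un_assoc)
qed

end
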